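(* Let $q$ be a prime power and let $\mathcal{F}=(\mathcal{F}_1,\ldots,\mathcal{F}_r)$ be a flag of type $(t_1,\ldots,t_r)$ on $\mathbb{F}_{q^n}$. Assume $m$ is a divisor of $n$ with $m=t_i$ for some $i\in\{1,\ldots,r\}$. If $|\mathrm{Orb}(\mathcal{F})|=\frac{q^n-1}{q^m-1}$, then $m=t_1$, the code $\mathrm{Orb}(\mathcal{F}_1)$ equals $\mathrm{Orb}(\mathbb{F}_{q^m})=\{\mathbb{F}_{q^m}\gamma:\gamma\in\mathbb{F}_{q^n}^*\}$ (the $m$-spread of $\mathbb{F}_{q^n}$ formed by the multiplicative translates of the subfield $\mathbb{F}_{q^m}$), and $m$ divides $t_j$ for every $j\in\{1,\ldots,r\}$.
   Context: $\mathbb{F}_{q^n}$ is regarded as an $\mathbb{F}_q$-vector space. A flag of type $(t_1,\ldots,t_r)$ on $\mathbb{F}_{q^n}$ is a sequence $(\mathcal{F}_1,\ldots,\mathcal{F}_r)$ of $\mathbb{F}_q$-subspaces with $\{0\}\subsetneq\mathcal{F}_1\subsetneq\cdots\subsetneq\mathcal{F}_r\subsetneq\mathbb{F}_{q^n}$ and $\dim_{\mathbb{F}_q}\mathcal{F}_i=t_i$. For $\gamma\in\mathbb{F}_{q^n}^*$, $\mathcal{U}\gamma=\{u\gamma:u\in\mathcal{U}\}$ and $\mathcal{F}\gamma=(\mathcal{F}_1\gamma,\ldots,\mathcal{F}_r\gamma)$. The cyclic orbit codes are $\mathrm{Orb}(\mathcal{U})=\{\mathcal{U}\gamma:\gamma\in\mathbb{F}_{q^n}^*\}$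 and $\mathrm{Orb}(\mathcal{F})=\{\mathcal{F}\gamma:\gamma\in\mathbb{F}_{q^n}^*\}$. An $m$-spread of $\mathbb{F}_{q^n}$ is a set of $m$-dimensional $\mathbb{F}_q$-subspaces that pairwise intersect in $\{0\}$ and whose union is $\mathbb{F}_{q^n}$. *)

theory Defs
  imports "HOL-Algebra.Embedded_Algebras" "HOL-Computational_Algebra.Primes"
begin

text \<open>The ambient field F_(q^n) is a finite field R (HOL-Algebra record) containing a subfield K
  with card K = q and dimension n over K.  F_q-subspaces are subalgebra K V R, and
  dim_(F_q) V = t is ring.dimension R t K V.\<close>

definition translate :: "('a, 'b) ring_scheme \<Rightarrow> 'a set \<Rightarrow> 'a \<Rightarrow> 'a set" where
  "translate R U \<gamma> = (\<lambda>u. u \<otimes>\<^bsub>R\<^esub> \<gamma>) ` U"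

definition orb :: "('a, 'b) ring_scheme \<Rightarrow> 'a set \<Rightarrow> 'a set set" where
  "orb R U = {translate R U \<gamma> | \<gamma>. \<gamma> \<in> carrier R - {\<zero>\<^bsub>R\<^esub>}}"

definition flag_orb :: "('a, 'b) ring_scheme \<Rightarrow> 'a set list \<Rightarrow> 'a set list set" where
  "flag_orb R Fs = {map (\<lambda>U. translate R U \<gamma>) Fs | \<gamma>. \<gamma> \<in> carrier R - {\<zero>\<^bsub>R\<^esub>}}"

definition is_flag :: "('a, 'b) ring_scheme \<Rightarrow> 'a set \<Rightarrow> 'a set list \<Rightarrow> nat list \<Rightarrow> bool" where
  "is_flag R K Fs ts \<longleftrightarrow>
     length Fs = length ts \<and> Fs \<noteq> [] \<and>
     (\<forall>i < length Fs. subalgebra K (Fs ! i) R \<and> ring.dimension R (ts ! i) K (Fs ! i)) \<and>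
     {\<zero>\<^bsub>R\<^esub>} \<subset> Fs ! 0 \<and>
     (\<forall>i. Suc i < length Fs \<longrightarrow> Fs ! i \<subset> Fs ! Suc i) \<and>
     last Fs \<subset> carrier R"

end

theory Submission
  imports Defs
begin

(* Let S consist of 0 and the multipliers \<gamma> with F_i \<gamma> \<subseteq> F_i for every i.  S is a subfield
   of F_(q^n) containing F_q, and every F_i is an S-vector space.  By orbit-stabilizer,
   |Orb(F)| (|S| - 1) = q^n - 1, so the hypothesis on |Orb(F)| forces |S| = q^m.  Counting
   vectors, every t_j is then a multiple of m; as m is one of the t_i and t_1 is the smallest,
   m = t_1.  Finally F_1 is an S-subspace of the same size as S, hence F_1 = S u for any
   nonzero u in F_1, and Orb(F_1) = Orb(S). *)

lemma card_eq_card_image_mult: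
  assumes "finite A" and "\<And>x. x \<in> A \<Longrightarrow> card {y \<in> A. f y = f x} = c"
  shows "card A = card (f ` A) * c"
proof -
  have "card A = (\<Sum>z\<in>f ` A. card {y \<in> A. f y = z})"
    unfolding card_eq_sum using assms(1) by (rule sum.image_gen)
  also have "\<dots> = (\<Sum>z\<in>f ` A. c)"
    using assms(2) by (intro sum.cong) auto
  finally show ?thesis by simp
qed

context ring
begin

lemma one_less_card_subfield:
  assumes "subfield K R" and "finite K"
  shows "1 < card K"
proof -
  have "{\<zero>, \<one>} \<subseteq> K" and "\<one> \<noteq> \<zero>"
    using subringE(2,3)[OF subfieldE(1)[OF assms(1)]] subfieldE(6)[OF assms(1)] by auto
  then have "card {\<zero>, \<one>} \<le> card K"
    using card_mono[OF assms(2)] by blast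
  with \<open>\<one> \<noteq> \<zero>\<close> show ?thesis
    by simp
qed

lemma subalgebra_restrict_scalars:
  assumes "subalgebra L V R" and "K \<subseteq> L"
  shows "subalgebra K V R"
  using assms unfolding subalgebra_def subalgebra_axioms_def by blast

lemma subalgebra_of_subring:
  assumes "subring S R" and "K \<subseteq> S"
  shows "subalgebra K S R"
  using assms subringE(6)[OF assms(1)] subring.axioms(1)[OF assms(1)]
  unfolding subalgebra_def subalgebra_axioms_def by blast

lemma card_line_extension:
  assumes K: "subfield K R" and Us: "set Us \<subseteq> carrier R"
    and v: "v \<in> carrier R" "v \<notin> Span K Us"
  shows "card (line_extension K v (Span K Us)) = card K * card (Span K Us)"
proof -
  have "inj_on (\<lambda>(k, e). k \<otimes> v \<oplus> e) (K \<times> Span K Us)"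
  proof (rule inj_onI, clarify)
    fix k e k' e'
    assume k: "k \<in> K" "k' \<in> K" and e: "e \<in> Span K Us" "e' \<in> Span K Us"
      and eq: "k \<otimes> v \<oplus> e = k' \<otimes> v \<oplus> e'"
    have carrier: "k \<in> carrier R" "k' \<in> carrier R" "e \<in> carrier R" "e' \<in> carrier R"
      using k e subfieldE(3)[OF K] Span_in_carrier[OF subfieldE(3)[OF K] Us] by auto
    have "(k \<ominus> k') \<otimes> v = (k' \<otimes> v \<oplus> e') \<ominus> (k' \<otimes> v \<oplus> e)"
      unfolding eq[symmetric] using carrier v(1) by algebra
    also have "\<dots> = e' \<ominus> e"
      using carrier v(1) by algebra
    finally have "(k \<ominus> k') \<otimes> v \<in> Span K Us"
      using e Span_subgroup_props[OF K Us] by (simp add: a_minus_def)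
    moreover have "k \<ominus> k' \<in> K"
      using k subringE(5,7)[OF subfieldE(1)[OF K]] by (simp add: a_minus_def)
    ultimately have "k = k'"
      using Span_m_inv_simprule[OF K Us, of "k \<ominus> k'" v] v carrier
      by (metis DiffI r_right_minus_eq singletonD)
    with eq carrier v(1) show "k = k' \<and> e = e'"
      by simp
  qed
  moreover have "line_extension K v (Span K Us) = (\<lambda>(k, e). k \<otimes> v \<oplus> e) ` (K \<times> Span K Us)"
    unfolding line_extension_mem_iff set_eq_iff by auto
  ultimately show ?thesis
    by (simp add: card_image card_cartesian_product)
qed

lemma card_Span_independent:
  assumes "subfield K R" and "independent K Us"
  shows "card (Span K Us) = card K ^ length Us"
  using assms(2,1)
proof induction
  case li_Nil
  show ?case by simp
next
  case (li_Cons u K Us)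
  then show ?case
    using card_line_extension[OF li_Cons.prems independent_in_carrier[OF li_Cons.hyps(3)]]
    by simp
qed

lemma card_dimension:
  assumes "subfield K R" and "dimension n K E"
  shows "card E = card K ^ n"
  using exists_base[OF assms] card_Span_independent[OF assms(1)] by metis

lemma finite_dimension_over_superfield:
  assumes K: "subfield K R" and L: "subfield L R" "K \<subseteq> L"
    and "finite_dimension K (carrier R)" and V: "subalgebra L V R"
  shows "finite_dimension L V"
proof -
  obtain Bs where Bs: "set Bs \<subseteq> carrier R" "Span K Bs = carrier R"
    using assms(4) exists_base[OF K] by (meson finite_dimensionE')
  have "subalgebra K (Span L Bs) R"
    using subalgebra_restrict_scalars[OF Span_is_subalgebra[OF L(1) Bs(1)] L(2)] .
  then have "Span L Bs = carrier R"
    using subalgebra_Span_incl[OF K _ Span_base_incl[OF L(1) Bs(1)]] Bs(2)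
      Span_in_carrier[OF subfieldE(3)[OF L(1)] Bs(1)]
    by blast
  then show ?thesis
    using subalbegra_incl_imp_finite_dimension[OF L(1) _ V subalgebra_in_carrier[OF V]]
      Span_finite_dimension[OF L(1) Bs(1)] by simp
qed

lemma dimension_of_card:
  assumes K: "subfield K R" and "finite (carrier R)" "finite_dimension K (carrier R)"
    and V: "subalgebra K V R" and "card V = card K ^ m"
  shows "dimension m K V"
proof -
  obtain d where d: "dimension d K V"
    using subalbegra_incl_imp_finite_dimension[OF K assms(3) V subalgebra_in_carrier[OF V]] by blast
  have "1 < card K"
    using one_less_card_subfield[OF K] subfieldE(3)[OF K] assms(2) finite_subset by blast
  then have "d = m"
    using card_dimension[OF K d] assms(5) by simp
  with d show ?thesis by simp
qed

lemma dvd_dimension_of_subalgebra: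
  assumes fin: "finite (carrier R)" and K: "subfield K R" and L: "subfield L R" "K \<subseteq> L"
    and "finite_dimension K (carrier R)" and card_L: "card L = card K ^ m"
    and V: "subalgebra L V R" and "dimension t K V"
  shows "m dvd t"
proof -
  obtain d where d: "dimension d L V"
    using finite_dimension_over_superfield[OF K L assms(5) V] by blast
  have "card K ^ t = card K ^ (m * d)"
    using card_dimension[OF K assms(8)] card_dimension[OF L(1) d] card_L by (simp add: power_mult)
  moreover have "1 < card K"
    using one_less_card_subfield[OF K] subfieldE(3)[OF K] fin finite_subset by blast
  ultimately show ?thesis by simp
qed

lemma translate_translate:
  assumes "U \<subseteq> carrier R" and "a \<in> carrier R" and "b \<in> carrier R"
  shows "translate R (translate R U a) b = translate R U (a \<otimes> b)"
  using assms unfolding translate_def image_image by (auto simp: m_assoc intro!: image_cong)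

lemma translate_one:
  assumes "U \<subseteq> carrier R"
  shows "translate R U \<one> = U"
  using assms unfolding translate_def by (auto intro!: image_cong[where g = id, simplified])

end

lemma (in domain) card_translate:
  assumes "U \<subseteq> carrier R" and "\<gamma> \<in> carrier R - {\<zero>}"
  shows "card (translate R U \<gamma>) = card U"
  unfolding translate_def using assms m_rcancel[of \<gamma>]
  by (intro card_image inj_onI) auto

lemma (in domain) subalgebra_eq_translate:
  assumes "S \<subseteq> carrier R" and "subalgebra S U R" and "finite U" and "card U = card S"
    and "u \<in> U - {\<zero>}"
  shows "U = translate R S u"
proof -
  have u: "u \<in> carrier R - {\<zero>}"
    using assms(5) subalgebra_in_carrier[OF assms(2)] by auto
  have "translate R S u \<subseteq> U"
    unfolding translate_def using assms subalgebra.smult_closed[OF assms(2)] by auto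
  moreover have "card (translate R S u) = card U"
    using card_translate[OF assms(1) u] assms(4) by simp
  ultimately show ?thesis
    using card_subset_eq[OF assms(3)] by blast
qed

lemma (in field) orb_translate:
  assumes "S \<subseteq> carrier R" and "u \<in> carrier R - {\<zero>}"
  shows "orb R (translate R S u) = orb R S"
proof -
  have u: "u \<in> Units R"
    using assms(2) field_Units by simp
  then have inv_u: "inv u \<in> carrier R" "u \<otimes> inv u = \<one>"
    by simp_all
  have orb_eq: "orb R T = translate R T ` (carrier R - {\<zero>})" for T
    unfolding orb_def by blast
  have "orb R (translate R S u) = (\<lambda>\<gamma>. translate R S (u \<otimes> \<gamma>)) ` (carrier R - {\<zero>})"
    unfolding orb_eq using translate_translate[OF assms(1)] assms(2) by (auto intro!: image_cong)
  also have "\<dots> = translate R S ` ((\<lambda>\<gamma>. u \<otimes> \<gamma>) ` (carrier R - {\<zero>}))"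
    by (simp add: image_image)
  also have "(\<lambda>\<gamma>. u \<otimes> \<gamma>) ` (carrier R - {\<zero>}) = carrier R - {\<zero>}"
  proof (intro equalityI subsetI)
    fix \<gamma> assume "\<gamma> \<in> carrier R - {\<zero>}"
    then have "inv u \<otimes> \<gamma> \<in> carrier R - {\<zero>}" and "\<gamma> = u \<otimes> (inv u \<otimes> \<gamma>)"
      using inv_u assms(2) by (auto simp: integral_iff m_assoc[symmetric])
    then show "\<gamma> \<in> (\<lambda>\<gamma>. u \<otimes> \<gamma>) ` (carrier R - {\<zero>})"
      by blast
  qed (use assms(2) integral_iff in auto)
  finally show ?thesis
    unfolding orb_eq .
qed

lemma (in field) orb_eq_orb_of_card_eq:
  assumes "S \<subseteq> carrier R" and "subalgebra S U R" and "finite U" and "card U = card S"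
    and "{\<zero>} \<subset> U"
  shows "orb R U = orb R S"
proof -
  obtain u where u: "u \<in> U - {\<zero>}"
    using assms(5) by blast
  then have "U = translate R S u"
    using subalgebra_eq_translate[OF assms(1-4)] by blast
  moreover have "u \<in> carrier R - {\<zero>}"
    using u subalgebra_in_carrier[OF assms(2)] by blast
  ultimately show ?thesis
    using orb_translate[OF assms(1)] by simp
qed


(* The paper's Stab^+(F).  Inclusion suffices in the definition: for finite U and \<gamma> \<noteq> 0,
   U \<gamma> \<subseteq> U already forces U \<gamma> = U (translate_stabilizer_field). *)
definition stabilizer_field :: "('a, 'b) ring_scheme \<Rightarrow> 'a set set \<Rightarrow> 'a set" where
  "stabilizer_field R Us = {\<gamma> \<in> carrier R. \<forall>U\<in>Us. translate R U \<gamma> \<subseteq> U}"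

lemma stabilizer_field_iff:
  "\<gamma> \<in> stabilizer_field R Us \<longleftrightarrow> \<gamma> \<in> carrier R \<and> (\<forall>U\<in>Us. \<forall>u\<in>U. u \<otimes>\<^bsub>R\<^esub> \<gamma> \<in> U)"
  unfolding stabilizer_field_def translate_def by blast

context cring
begin

lemma subset_stabilizer_field:
  assumes "K \<subseteq> carrier R" and "\<And>U. U \<in> Us \<Longrightarrow> subalgebra K U R"
  shows "K \<subseteq> stabilizer_field R Us"
proof
  fix k assume k: "k \<in> K"
  have "u \<otimes> k \<in> U" if "U \<in> Us" "u \<in> U" for U u
  proof -
    have "u \<in> carrier R"
      using that subalgebra_in_carrier[OF assms(2)] by blast
    then show ?thesis
      using subalgebra.smult_closed[OF assms(2)[OF that(1)] k that(2)] k assms(1) m_comm by auto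
  qed
  then show "k \<in> stabilizer_field R Us"
    using k assms(1) unfolding stabilizer_field_iff by blast
qed

lemma subalgebra_stabilizer_field:
  assumes "additive_subgroup U R" and "U \<in> Us"
  shows "subalgebra (stabilizer_field R Us) U R"
proof (rule subalgebra.intro)
  show "subgroup U (add_monoid R)"
    using assms(1) by (simp add: additive_subgroup_def)
  show "subalgebra_axioms (stabilizer_field R Us) U R"
  proof
    fix k v assume k: "k \<in> stabilizer_field R Us" and v: "v \<in> U"
    then have "v \<otimes> k \<in> U" and "k \<in> carrier R"
      using assms(2) unfolding stabilizer_field_iff by blast+
    moreover have "v \<in> carrier R"
      using v additive_subgroup.a_subset[OF assms(1)] by blast
    ultimately show "k \<otimes> v \<in> U"
      by (simp add: m_comm)
  qed
qed

end

context field
begin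

context
  fixes Us :: "'a set set"
  assumes finite_carrier: "finite (carrier R)"
    and additive_subgroups: "\<And>U. U \<in> Us \<Longrightarrow> additive_subgroup U R"
begin

lemma translate_stabilizer_field:
  assumes "U \<in> Us" and "\<gamma> \<in> stabilizer_field R Us - {\<zero>}"
  shows "translate R U \<gamma> = U"
proof -
  have U: "U \<subseteq> carrier R"
    using additive_subgroup.a_subset[OF additive_subgroups[OF assms(1)]] .
  have "translate R U \<gamma> \<subseteq> U" and "card (translate R U \<gamma>) = card U"
    using assms card_translate[OF U] unfolding stabilizer_field_def by auto
  then show ?thesis
    using card_subset_eq finite_subset[OF U finite_carrier] by blast
qed

lemma subfield_stabilizer_field: "subfield (stabilizer_field R Us) R"
proof (rule subfieldI'[OF subringI])
  let ?S = "stabilizer_field R Us"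
  have U_carrier: "u \<in> carrier R" if "U \<in> Us" "u \<in> U" for U u
    using that additive_subgroup.a_subset[OF additive_subgroups] by blast
  have memI: "\<gamma> \<in> ?S"
    if "\<gamma> \<in> carrier R" "\<And>U u. U \<in> Us \<Longrightarrow> u \<in> U \<Longrightarrow> u \<in> carrier R \<Longrightarrow> u \<otimes> \<gamma> \<in> U" for \<gamma>
    using that U_carrier unfolding stabilizer_field_iff by blast
  have memD: "u \<otimes> \<gamma> \<in> U" if "\<gamma> \<in> ?S" "U \<in> Us" "u \<in> U" for \<gamma> U u
    using that unfolding stabilizer_field_iff by blast
  show S_carrier: "?S \<subseteq> carrier R"
    unfolding stabilizer_field_def by blast
  show "\<one> \<in> ?S"
    by (rule memI) simp_all
  show "\<ominus> h \<in> ?S" if "h \<in> ?S" for h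
    using subsetD[OF S_carrier that] memD[OF that]
      additive_subgroup.a_inv_closed[OF additive_subgroups]
    by (intro memI) (simp_all add: r_minus)
  show "h1 \<otimes> h2 \<in> ?S" if "h1 \<in> ?S" "h2 \<in> ?S" for h1 h2
    using subsetD[OF S_carrier that(1)] subsetD[OF S_carrier that(2)]
      memD[OF that(1)] memD[OF that(2)]
    by (intro memI) (simp_all add: m_assoc[symmetric])
  show "h1 \<oplus> h2 \<in> ?S" if "h1 \<in> ?S" "h2 \<in> ?S" for h1 h2
    using subsetD[OF S_carrier that(1)] subsetD[OF S_carrier that(2)]
      memD[OF that(1)] memD[OF that(2)]
      additive_subgroup.a_closed[OF additive_subgroups]
    by (intro memI) (simp_all add: r_distr)
  show "inv h \<in> ?S" if h: "h \<in> ?S - {\<zero>}" for h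
  proof -
    have h_unit: "h \<in> Units R"
      using h S_carrier field_Units by blast
    have "translate R U (inv h) = U" if "U \<in> Us" for U
    proof -
      have U: "U \<subseteq> carrier R"
        using U_carrier that by blast
      have "translate R U (inv h) = translate R (translate R U h) (inv h)"
        using translate_stabilizer_field[OF that h] by simp
      also have "\<dots> = U"
        using translate_translate[OF U] translate_one[OF U] h_unit by (simp add: Units_closed)
      finally show ?thesis .
    qed
    then show ?thesis
      using h_unit unfolding stabilizer_field_def by auto
  qed
qed

lemma translate_eq_iff_stabilizer_field:
  assumes x: "x \<in> carrier R - {\<zero>}" and y: "y \<in> carrier R - {\<zero>}"
  shows "(\<forall>U\<in>Us. translate R U y = translate R U x)
    \<longleftrightarrow> y \<in> (\<lambda>s. s \<otimes> x) ` (stabilizer_field R Us - {\<zero>})"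
proof
  note U_carrier = additive_subgroup.a_subset[OF additive_subgroups]
  have x_unit: "x \<in> Units R"
    using x field_Units by simp
  assume eq: "\<forall>U\<in>Us. translate R U y = translate R U x"
  define s where "s = y \<otimes> inv x"
  have y_eq: "y = s \<otimes> x"
    unfolding s_def using x_unit y by (simp add: m_assoc Units_closed)
  have s: "s \<in> carrier R - {\<zero>}"
    using x_unit x y y_eq unfolding s_def by auto
  have "translate R U s = U" if "U \<in> Us" for U
  proof -
    have "translate R U s = translate R (translate R U y) (inv x)"
      unfolding s_def using translate_translate[OF U_carrier[OF that]] x_unit y by simp
    also have "\<dots> = U"
      using eq that translate_translate[OF U_carrier[OF that]] translate_one[OF U_carrier[OF that]]
        x_unit by (simp add: Units_closed)
    finally show ?thesis .
  qed
  then have "s \<in> stabilizer_field R Us"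
    using s unfolding stabilizer_field_def by auto
  with s y_eq show "y \<in> (\<lambda>s. s \<otimes> x) ` (stabilizer_field R Us - {\<zero>})"
    by blast
next
  assume "y \<in> (\<lambda>s. s \<otimes> x) ` (stabilizer_field R Us - {\<zero>})"
  then obtain s where s: "s \<in> stabilizer_field R Us - {\<zero>}" "y = s \<otimes> x"
    by blast
  have "translate R U y = translate R U x" if "U \<in> Us" for U
  proof -
    have "translate R U y = translate R (translate R U s) x"
      using s x translate_translate[OF additive_subgroup.a_subset[OF additive_subgroups[OF that]]]
      unfolding stabilizer_field_def by simp
    then show ?thesis
      using translate_stabilizer_field[OF that s(1)] by simp
  qed
  then show "\<forall>U\<in>Us. translate R U y = translate R U x"
    by blast
qed

end

lemma card_flag_orb_mult_card_stabilizer_field: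
  assumes fin: "finite (carrier R)" and groups: "\<And>U. U \<in> set Fs \<Longrightarrow> additive_subgroup U R"
  shows "card (flag_orb R Fs) * (card (stabilizer_field R (set Fs)) - 1) = card (carrier R) - 1"
proof -
  let ?S = "stabilizer_field R (set Fs)" and ?G = "carrier R - {\<zero>}"
  define act where "act \<gamma> = map (\<lambda>U. translate R U \<gamma>) Fs" for \<gamma>
  have orbit: "flag_orb R Fs = act ` ?G"
    unfolding flag_orb_def act_def by blast
  have S: "subfield ?S R"
    using subfield_stabilizer_field[OF fin groups] .
  have fiber: "card {y \<in> ?G. act y = act x} = card ?S - 1" if x: "x \<in> ?G" for x
  proof -
    have "s \<otimes> x \<in> ?G" if "s \<in> ?S - {\<zero>}" for s
      using that x subfieldE(3)[OF S] by (auto simp: integral_iff)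
    moreover have "act y = act x \<longleftrightarrow> y \<in> (\<lambda>s. s \<otimes> x) ` (?S - {\<zero>})" if "y \<in> ?G" for y
      unfolding act_def map_eq_conv
      using translate_eq_iff_stabilizer_field[OF fin groups x that] by simp
    ultimately have "{y \<in> ?G. act y = act x} = (\<lambda>s. s \<otimes> x) ` (?S - {\<zero>})"
      by auto
    moreover have "inj_on (\<lambda>s. s \<otimes> x) (?S - {\<zero>})"
      using x subfieldE(3)[OF S] m_rcancel[of x] by (intro inj_onI) (simp add: subset_iff)
    ultimately show ?thesis
      using subringE(2)[OF subfieldE(1)[OF S]] by (simp add: card_image)
  qed
  have "card ?G = card (flag_orb R Fs) * (card ?S - 1)"
    unfolding orbit using card_eq_card_image_mult[OF _ fiber] fin by blast
  then show ?thesis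
    by simp
qed

lemma card_stabilizer_field_eq:
  assumes fin: "finite (carrier R)" and groups: "\<And>U. U \<in> set Fs \<Longrightarrow> additive_subgroup U R"
    and card_orb: "real (card (flag_orb R Fs)) = (real (card (carrier R)) - 1) / (real N - 1)"
  shows "card (stabilizer_field R (set Fs)) = N"
proof -
  let ?S = "stabilizer_field R (set Fs)" and ?O = "card (flag_orb R Fs)"
  have "\<zero> \<in> ?S"
    using subringE(2)[OF subfieldE(1)[OF subfield_stabilizer_field[OF fin groups]]] .
  moreover have "finite ?S"
    by (rule finite_subset[OF _ fin]) (auto simp: stabilizer_field_def)
  ultimately have "1 \<le> card ?S"
    by (auto simp: Suc_le_eq card_gt_0_iff)
  have "1 < card (carrier R)"
    using one_less_card_subfield[OF carrier_is_subfield fin] .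
  have "real (?O * (card ?S - 1)) = real (card (carrier R) - 1)"
    using card_flag_orb_mult_card_stabilizer_field[OF fin groups] by simp
  then have product: "real ?O * (real (card ?S) - 1) = real (card (carrier R)) - 1"
    using \<open>1 \<le> card ?S\<close> \<open>1 < card (carrier R)\<close> by (simp add: of_nat_diff)
  have "?O \<noteq> 0"
  proof
    assume "?O = 0"
    with product \<open>1 < card (carrier R)\<close> show False
      by simp
  qed
  then have "real N - 1 \<noteq> 0"
    using card_orb by auto
  then have "real ?O * (real N - 1) = real (card (carrier R)) - 1"
    using card_orb by (simp add: field_simps)
  with product have "real ?O * (real (card ?S) - 1) = real ?O * (real N - 1)"
    by simp
  with \<open>?O \<noteq> 0\<close> show ?thesis
    by simp
qed

end

lemma is_flag_length:
  assumes "is_flag R K Fs ts"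
  shows "length Fs = length ts" and "0 < length ts"
  using assms unfolding is_flag_def by auto

lemma is_flag_subalgebra:
  assumes "is_flag R K Fs ts" and "U \<in> set Fs"
  shows "subalgebra K U R"
  using assms unfolding is_flag_def by (auto simp: in_set_conv_nth)

lemma is_flag_additive_subgroup:
  assumes "is_flag R K Fs ts" and "U \<in> set Fs"
  shows "additive_subgroup U R"
  using is_flag_subalgebra[OF assms] by (simp add: subalgebra_def additive_subgroup_def)

lemma is_flag_hd_subset:
  assumes "is_flag R K Fs ts" and "i < length Fs"
  shows "Fs ! 0 \<subseteq> Fs ! i"
  using assms(2)
proof (induction i)
  case 0
  show ?case by simp
next
  case (Suc i)
  then have "Fs ! i \<subset> Fs ! Suc i"
    using assms(1) unfolding is_flag_def by blast
  with Suc show ?case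
    by auto
qed

context ring
begin

lemma is_flag_type_hd_le:
  assumes K: "subfield K R" and flag: "is_flag R K Fs ts" and i: "i < length ts"
  shows "ts ! 0 \<le> ts ! i"
proof -
  have dims: "dimension (ts ! 0) K (Fs ! 0)" "dimension (ts ! i) K (Fs ! i)"
    and "Fs ! 0 \<subseteq> Fs ! i"
    using flag i is_flag_hd_subset[OF flag] unfolding is_flag_def by auto
  moreover obtain Vs where "set Vs \<subseteq> carrier R" "independent K Vs" "length Vs = ts ! 0"
    and "Span K Vs = Fs ! 0"
    using exists_base[OF K dims(1)] by blast
  ultimately show ?thesis
    using independent_length_le_dimension[OF K dims(2)] Span_base_incl[OF K] by (metis subset_trans)
qed

lemma is_flag_type_hd_eq:
  assumes K: "subfield K R" and flag: "is_flag R K Fs ts"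
    and "m \<in> set ts" and "m dvd ts ! 0"
  shows "m = ts ! 0"
proof -
  obtain i where "i < length ts" "m = ts ! i"
    using assms(3) by (auto simp: in_set_conv_nth)
  then have "ts ! 0 \<le> m"
    using is_flag_type_hd_le[OF K flag] by simp
  moreover have "ts ! 0 \<noteq> 0"
  proof
    assume "ts ! 0 = 0"
    then have "dimension 0 K (Fs ! 0)" and "{\<zero>} \<subset> Fs ! 0"
      using flag unfolding is_flag_def by auto
    then show False
      using dimension_zero[OF K] by blast
  qed
  ultimately show ?thesis
    using assms(4) by (simp add: dvd_imp_le le_antisym)
qed

end

context field
begin

lemma stabilizer_field_of_flag:
  assumes fin: "finite (carrier R)" and "K \<subseteq> carrier R" and flag: "is_flag R K Fs ts"
  shows "subfield (stabilizer_field R (set Fs)) R"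
    and "K \<subseteq> stabilizer_field R (set Fs)"
    and "\<And>U. U \<in> set Fs \<Longrightarrow> subalgebra (stabilizer_field R (set Fs)) U R"
  using subfield_stabilizer_field[OF fin is_flag_additive_subgroup[OF flag]]
    subset_stabilizer_field[OF assms(2) is_flag_subalgebra[OF flag]]
    subalgebra_stabilizer_field[OF is_flag_additive_subgroup[OF flag]]
  by auto

lemma dvd_flag_type:
  assumes fin: "finite (carrier R)" and K: "subfield K R" and "finite_dimension K (carrier R)"
    and flag: "is_flag R K Fs ts" and card_S: "card (stabilizer_field R (set Fs)) = card K ^ m"
    and j: "j < length ts"
  shows "m dvd ts ! j"
proof -
  note S = stabilizer_field_of_flag[OF fin subfieldE(3)[OF K] flag]
  have "Fs ! j \<in> set Fs" and "dimension (ts ! j) K (Fs ! j)"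
    using flag j unfolding is_flag_def by auto
  then show ?thesis
    using dvd_dimension_of_subalgebra[OF fin K S(1,2) assms(3) card_S S(3)] by blast
qed

lemma orb_flag_hd:
  assumes fin: "finite (carrier R)" and K: "subfield K R" and flag: "is_flag R K Fs ts"
    and card_S: "card (stabilizer_field R (set Fs)) = card K ^ (ts ! 0)"
  shows "orb R (Fs ! 0) = orb R (stabilizer_field R (set Fs))"
proof -
  note S = stabilizer_field_of_flag[OF fin subfieldE(3)[OF K] flag]
  have F0: "Fs ! 0 \<in> set Fs" and dim: "dimension (ts ! 0) K (Fs ! 0)"
    using flag is_flag_length[OF flag] unfolding is_flag_def by auto
  have hd: "{\<zero>} \<subset> Fs ! 0"
    using flag unfolding is_flag_def by blast
  have "card (Fs ! 0) = card (stabilizer_field R (set Fs))"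
    using card_dimension[OF K dim] card_S by simp
  moreover have "finite (Fs ! 0)"
    using subalgebra_in_carrier[OF is_flag_subalgebra[OF flag F0]] fin finite_subset by blast
  ultimately show ?thesis
    using orb_eq_orb_of_card_eq[OF subfieldE(3)[OF S(1)] S(3)[OF F0] _ _ hd] by blast
qed

end

theorem corollary3p11:
  fixes R :: "('a, 'b) ring_scheme" and K :: "'a set" and q n m :: nat
    and Fs :: "'a set list" and ts :: "nat list"
  assumes "field R" and "finite (carrier R)"
    and "subfield K R" and "card K = q"
    and "\<exists>p k. prime p \<and> k > 0 \<and> q = p ^ k"
    and "ring.dimension R n K (carrier R)"
    and "is_flag R K Fs ts"
    and "m dvd n" and "m \<in> set ts"
    and "real (card (flag_orb R Fs)) = (real q ^ n - 1) / (real q ^ m - 1)"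
  shows "m = ts ! 0
    \<and> (\<exists>S. subfield S R \<and> K \<subseteq> S \<and> ring.dimension R m K S \<and> orb R (Fs ! 0) = orb R S)
    \<and> (\<forall>j < length ts. m dvd ts ! j)"
proof -
  interpret field R by fact
  note fin = assms(2) and K = assms(3) and flag = assms(7)
  let ?S = "stabilizer_field R (set Fs)"
  note S = stabilizer_field_of_flag[OF fin subfieldE(3)[OF K] flag]
  have finite_dim: "finite_dimension K (carrier R)"
    using finite_dimensionI[OF assms(6)] .
  have "card (carrier R) = q ^ n"
    using card_dimension[OF K assms(6)] assms(4) by simp
  then have card_S: "card ?S = card K ^ m"
    using card_stabilizer_field_eq[OF fin is_flag_additive_subgroup[OF flag], where N = "q ^ m"]
      assms(4,10) by simp
  then have dvd: "\<forall>j < length ts. m dvd ts ! j"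
    using dvd_flag_type[OF fin K finite_dim flag] by blast
  moreover have m: "m = ts ! 0"
    using is_flag_type_hd_eq[OF K flag assms(9)] dvd is_flag_length[OF flag] by blast
  moreover have "dimension m K ?S"
    using dimension_of_card[OF K fin finite_dim subalgebra_of_subring[OF subfieldE(1)[OF S(1)] S(2)]
        card_S] .
  moreover have "orb R (Fs ! 0) = orb R ?S"
    using orb_flag_hd[OF fin K flag] card_S m by simp
  ultimately show ?thesis
    using S(1,2) by blast
qed

end
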